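(* Let $\mathcal{H}$ be a Hilbert space of finite dimension $d\geq 2$ with orthonormal basis $\{\phi_k\}_{k=1}^d$, and let $\mathcal{I}$ be the instrument on $\Omega=\{0,1\}$ given by $\mathcal{I}_\omega(T)=L_\omega^*TL_\omega$ with $L_0=|\phi_d\rangle\langle\phi_d|$ and $L_1=\sum_{k=1}^{d-1}|\phi_{k+1}\rangle\langle\phi_k|$. Then $\mathsf{A}^\mathcal{I}_1\prec\mathsf{A}^\mathcal{I}_2\prec\cdots\prec\mathsf{A}^\mathcal{I}_{d-1}\simeq\mathsf{A}^\mathcal{I}_d\simeq\cdots$, and hence $\mathrm{sat}(\mathcal{I})=d-1$.
   Context: For finite-outcome observables (maps into positive operators summing to $\mathbb{1}$), $\mathsf{A}\preceq\mathsf{B}$ means there is $\kappa:\Omega_\mathsf{A}\times\Omega_\mathsf{B}\to[0,1]$ with $\sum_\omega\kappa(\omega|\omega')=1$ and $\mathsf{A}(\omega)=\sum_{\omega'}\kappa(\omega|\omega')\mathsf{B}(\omega')$; $\mathsf{A}\simeq\mathsf{B}$ means both directions hold; $\mathsf{A}\prec\mathsf{B}$ means $\mathsf{A}\preceq\mathsf{B}$ but not $\mathsf{B}\preceq\mathsf{A}$. $\mathsf{A}^\mathcal{I}_n(\omega_1,\ldots,\omega_n)=\mathcal{I}_{\omega_1}\circ\cdots\circ\mathcal{I}_{\omega_n}(\mathbb{1})$ on $\Omega^n$. The saturation step $\mathrm{sat}(\mathcal{I})$ is the smallest positive integer $n$ with $\mathsf{A}^\mathcal{I}_n\simeq\mathsf{A}^\mathcal{I}_{n+1}$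 ($\infty$ if none). *)

theory Defs
  imports Complex_Main "HOL-Library.Extended_Nat"
begin

text \<open>Operators on the d-dimensional Hilbert space C^d are represented as
  functions nat \<Rightarrow> nat \<Rightarrow> complex, of which only the entries with
  indices < d are meaningful; vectors as nat \<Rightarrow> complex (components < d).
  Basis index k = 1..d of the paper corresponds to index k-1 here.\<close>

type_synonym cvec = "nat \<Rightarrow> complex"
type_synonym cmat = "nat \<Rightarrow> nat \<Rightarrow> complex"

definition mmul :: "nat \<Rightarrow> cmat \<Rightarrow> cmat \<Rightarrow> cmat" where
  "mmul d A B = (\<lambda>i j. \<Sum>k<d. A i k * B k j)"

definition adj :: "cmat \<Rightarrow> cmat" where
  "adj A = (\<lambda>i j. cnj (A j i))"

definition idm :: cmat where
  "idm = (\<lambda>i j. if i = j then 1 else 0)"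

definition ketbra :: "cvec \<Rightarrow> cvec \<Rightarrow> cmat" where
  "ketbra u v = (\<lambda>i j. u i * cnj (v j))"

definition mat_eq :: "nat \<Rightarrow> cmat \<Rightarrow> cmat \<Rightarrow> bool" where
  "mat_eq d A B \<longleftrightarrow> (\<forall>i<d. \<forall>j<d. A i j = B i j)"

definition orthonormal_basis :: "nat \<Rightarrow> (nat \<Rightarrow> cvec) \<Rightarrow> bool" where
  "orthonormal_basis d \<phi> \<longleftrightarrow>
     (\<forall>k<d. \<forall>l<d. (\<Sum>i<d. cnj (\<phi> k i) * \<phi> l i) = (if k = l then 1 else 0))"

definition kraus_instr :: "nat \<Rightarrow> ('o \<Rightarrow> cmat) \<Rightarrow> 'o \<Rightarrow> cmat \<Rightarrow> cmat" where
  "kraus_instr d L \<omega> T = mmul d (adj (L \<omega>)) (mmul d T (L \<omega>))"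

definition outcomes_n :: "'o set \<Rightarrow> nat \<Rightarrow> 'o list set" where
  "outcomes_n \<Omega> n = {xs. length xs = n \<and> set xs \<subseteq> \<Omega>}"

definition seq_obs :: "('o \<Rightarrow> cmat \<Rightarrow> cmat) \<Rightarrow> 'o list \<Rightarrow> cmat" where
  "seq_obs I xs = foldr (\<lambda>\<omega> T. I \<omega> T) xs idm"

definition post_le :: "nat \<Rightarrow> 'a set \<Rightarrow> ('a \<Rightarrow> cmat) \<Rightarrow> 'b set \<Rightarrow> ('b \<Rightarrow> cmat) \<Rightarrow> bool" where
  "post_le d \<Omega>A A \<Omega>B B \<longleftrightarrow>
     (\<exists>\<kappa> :: 'a \<Rightarrow> 'b \<Rightarrow> real.
        (\<forall>\<omega>\<in>\<Omega>A. \<forall>\<omega>'\<in>\<Omega>B. 0 \<le> \<kappa> \<omega> \<omega>' \<and> \<kappa> \<omega> \<omega>' \<le> 1) \<and>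
        (\<forall>\<omega>'\<in>\<Omega>B. (\<Sum>\<omega>\<in>\<Omega>A. \<kappa> \<omega> \<omega>') = 1) \<and>
        (\<forall>\<omega>\<in>\<Omega>A. mat_eq d (A \<omega>) (\<lambda>i j. \<Sum>\<omega>'\<in>\<Omega>B. complex_of_real (\<kappa> \<omega> \<omega>') * B \<omega>' i j)))"

definition post_equiv :: "nat \<Rightarrow> 'a set \<Rightarrow> ('a \<Rightarrow> cmat) \<Rightarrow> 'b set \<Rightarrow> ('b \<Rightarrow> cmat) \<Rightarrow> bool" where
  "post_equiv d \<Omega>A A \<Omega>B B \<longleftrightarrow> post_le d \<Omega>A A \<Omega>B B \<and> post_le d \<Omega>B B \<Omega>A A"

definition post_less :: "nat \<Rightarrow> 'a set \<Rightarrow> ('a \<Rightarrow> cmat) \<Rightarrow> 'b set \<Rightarrow> ('b \<Rightarrow> cmat) \<Rightarrow> bool" where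
  "post_less d \<Omega>A A \<Omega>B B \<longleftrightarrow> post_le d \<Omega>A A \<Omega>B B \<and> \<not> post_le d \<Omega>B B \<Omega>A A"

definition seq_equiv :: "nat \<Rightarrow> 'o set \<Rightarrow> ('o \<Rightarrow> cmat \<Rightarrow> cmat) \<Rightarrow> nat \<Rightarrow> bool" where
  "seq_equiv d \<Omega> I n \<longleftrightarrow>
     post_equiv d (outcomes_n \<Omega> n) (seq_obs I) (outcomes_n \<Omega> (Suc n)) (seq_obs I)"

definition sat :: "nat \<Rightarrow> 'o set \<Rightarrow> ('o \<Rightarrow> cmat \<Rightarrow> cmat) \<Rightarrow> enat" where
  "sat d \<Omega> I = (if \<exists>n\<ge>1. seq_equiv d \<Omega> I n
                   then enat (LEAST n. n \<ge> 1 \<and> seq_equiv d \<Omega> I n) else \<infinity>)"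

end

theory Submission
  imports Defs
begin

text \<open>Both Kraus operators map basis vectors to basis vectors or to 0, so each effect
  A_n(w) is the projection onto the span of those \<phi>_k whose walk survives w: outcome 1 moves k
  to k + 1 and kills d - 1, outcome 0 kills everything except d - 1. Splitting by the last
  outcome gives A_n \<preceq> A_(n+1). After d - 1 steps every surviving walk sits at d - 1, so the
  next outcome carries no information and A_(n+1) \<preceq> A_n. For n < d - 1 the effect of 1^n 0
  projects onto \<phi>_(d-1-n) alone, whereas every length-n walk surviving from d - 1 - n also
  survives from 0; comparing diagonal coefficients at these two indices shows that no
  post-processing of A_n yields it.\<close>

definition basis_proj :: "(nat \<Rightarrow> cvec) \<Rightarrow> nat set \<Rightarrow> cmat" where
  "basis_proj \<phi> S = (\<lambda>i j. \<Sum>m\<in>S. \<phi> m i * cnj (\<phi> m j))"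

definition basis_map :: "(nat \<Rightarrow> cvec) \<Rightarrow> nat set \<Rightarrow> (nat \<Rightarrow> nat) \<Rightarrow> cmat" where
  "basis_map \<phi> K g = (\<lambda>i j. \<Sum>k\<in>K. \<phi> (g k) i * cnj (\<phi> k j))"

lemma orthonormal_sum_pairing:
  assumes ob: "orthonormal_basis d \<phi>" and fin: "finite M" "finite K"
    and hM: "h ` M \<subseteq> {..<d}" and gK: "g ` K \<subseteq> {..<d}"
  shows "(\<Sum>b<d. (\<Sum>m\<in>M. x m * cnj (\<phi> (h m) b)) * (\<Sum>k\<in>K. \<phi> (g k) b * y k))
       = (\<Sum>m\<in>M. \<Sum>k\<in>K. if h m = g k then x m * y k else 0)"
proof -
  have "(\<Sum>b<d. (\<Sum>m\<in>M. x m * cnj (\<phi> (h m) b)) * (\<Sum>k\<in>K. \<phi> (g k) b * y k))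
      = (\<Sum>m\<in>M. \<Sum>k\<in>K. x m * y k * (\<Sum>b<d. cnj (\<phi> (h m) b) * \<phi> (g k) b))"
    by (simp add: sum_distrib_left sum_distrib_right sum.swap[of _ "{..<d}"] mult_ac)
  also have "\<dots> = (\<Sum>m\<in>M. \<Sum>k\<in>K. if h m = g k then x m * y k else 0)"
  proof (intro sum.cong refl)
    fix m k assume "m \<in> M" "k \<in> K"
    then have "h m < d" "g k < d" using hM gK by auto
    then show "x m * y k * (\<Sum>b<d. cnj (\<phi> (h m) b) * \<phi> (g k) b)
        = (if h m = g k then x m * y k else 0)"
      using ob unfolding orthonormal_basis_def by auto
  qed
  finally show ?thesis .
qed

lemma basis_proj_mmul_basis_map:
  assumes ob: "orthonormal_basis d \<phi>" and fin: "finite S" "finite K"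
    and S: "S \<subseteq> {..<d}" and gK: "g ` K \<subseteq> {..<d}"
    and T: "mat_eq d T (basis_proj \<phi> S)" and a: "a < d"
  shows "mmul d T (basis_map \<phi> K g) a j = basis_map \<phi> {k\<in>K. g k \<in> S} g a j"
proof -
  have "mmul d T (basis_map \<phi> K g) a j
      = (\<Sum>b<d. (\<Sum>m\<in>S. \<phi> m a * cnj (\<phi> (id m) b)) * (\<Sum>k\<in>K. \<phi> (g k) b * cnj (\<phi> k j)))"
    using T a by (auto simp: mmul_def mat_eq_def basis_proj_def basis_map_def intro!: sum.cong)
  also have "\<dots> = (\<Sum>m\<in>S. \<Sum>k\<in>K. if id m = g k then \<phi> m a * cnj (\<phi> k j) else 0)"
    by (rule orthonormal_sum_pairing[OF ob fin]) (use S gK in auto)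
  also have "\<dots> = (\<Sum>k\<in>K. \<Sum>m\<in>S. if m = g k then \<phi> (g k) a * cnj (\<phi> k j) else 0)"
    by (subst sum.swap) (auto intro!: sum.cong)
  also have "\<dots> = (\<Sum>k\<in>K. if g k \<in> S then \<phi> (g k) a * cnj (\<phi> k j) else 0)"
    using fin by (simp add: sum.delta')
  also have "\<dots> = basis_map \<phi> {k\<in>K. g k \<in> S} g a j"
    using fin by (simp add: basis_map_def sum.inter_filter)
  finally show ?thesis .
qed

lemma adj_basis_map_mmul:
  assumes ob: "orthonormal_basis d \<phi>" and fin: "finite K" and K': "K' \<subseteq> K"
    and gK: "g ` K \<subseteq> {..<d}" and inj: "inj_on g K"
    and X: "\<And>a. a < d \<Longrightarrow> X a j = basis_map \<phi> K' g a j"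
  shows "mmul d (adj (basis_map \<phi> K g)) X i j = basis_proj \<phi> K' i j"
proof -
  have fin': "finite K'" using fin K' finite_subset by blast
  have "mmul d (adj (basis_map \<phi> K g)) X i j
      = (\<Sum>a<d. (\<Sum>m\<in>K. \<phi> m i * cnj (\<phi> (g m) a)) * (\<Sum>k\<in>K'. \<phi> (g k) a * cnj (\<phi> k j)))"
    using X by (auto simp: mmul_def adj_def basis_map_def mult.commute intro!: sum.cong)
  also have "\<dots> = (\<Sum>m\<in>K. \<Sum>k\<in>K'. if g m = g k then \<phi> m i * cnj (\<phi> k j) else 0)"
    by (rule orthonormal_sum_pairing[OF ob fin fin']) (use K' gK in auto)
  also have "\<dots> = (\<Sum>k\<in>K'. \<Sum>m\<in>K. if m = k then \<phi> k i * cnj (\<phi> k j) else 0)"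
    by (subst sum.swap) (use inj K' in \<open>auto simp: inj_on_def intro!: sum.cong\<close>)
  also have "\<dots> = basis_proj \<phi> K' i j"
    using fin K' by (auto simp: basis_proj_def sum.delta' intro!: sum.cong)
  finally show ?thesis .
qed

lemma mmul_idm: "a < d \<Longrightarrow> mmul d idm X a j = X a j"
proof -
  assume "a < d"
  have "mmul d idm X a j = (\<Sum>b<d. if a = b then X b j else 0)"
    unfolding mmul_def idm_def by (rule sum.cong) auto
  with \<open>a < d\<close> show ?thesis by simp
qed

context
  fixes d :: nat and \<phi> :: "nat \<Rightarrow> cvec" and K :: "nat set" and g :: "nat \<Rightarrow> nat"
  assumes ob: "orthonormal_basis d \<phi>" and fin: "finite K"
    and gK: "g ` K \<subseteq> {..<d}" and inj: "inj_on g K"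
begin

lemma conj_basis_map_idm:
  "mat_eq d (mmul d (adj (basis_map \<phi> K g)) (mmul d idm (basis_map \<phi> K g))) (basis_proj \<phi> K)"
  unfolding mat_eq_def
  by (intro allI impI adj_basis_map_mmul[OF ob fin order_refl gK inj] mmul_idm)

lemma conj_basis_map_basis_proj:
  assumes "finite S" "S \<subseteq> {..<d}" "mat_eq d T (basis_proj \<phi> S)"
  shows "mat_eq d (mmul d (adj (basis_map \<phi> K g)) (mmul d T (basis_map \<phi> K g)))
                  (basis_proj \<phi> {k\<in>K. g k \<in> S})"
  unfolding mat_eq_def
  by (intro allI impI adj_basis_map_mmul[OF ob fin _ gK inj]
      basis_proj_mmul_basis_map[OF ob assms(1) fin assms(2) gK assms(3)]) auto

end

definition diag_coeff :: "(nat \<Rightarrow> cvec) \<Rightarrow> nat \<Rightarrow> nat \<Rightarrow> cmat \<Rightarrow> complex" where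
  "diag_coeff \<phi> d j X = (\<Sum>i<d. \<Sum>l<d. cnj (\<phi> j i) * X i l * \<phi> j l)"

lemma diag_coeff_cong: "mat_eq d X Y \<Longrightarrow> diag_coeff \<phi> d j X = diag_coeff \<phi> d j Y"
  unfolding diag_coeff_def mat_eq_def by (auto intro!: sum.cong)

lemma diag_coeff_sum:
  "diag_coeff \<phi> d j (\<lambda>i l. \<Sum>w\<in>W. c w * B w i l) = (\<Sum>w\<in>W. c w * diag_coeff \<phi> d j (B w))"
  unfolding diag_coeff_def
  by (simp add: sum_distrib_left sum_distrib_right sum.swap[of _ W] mult_ac)

lemma diag_coeff_basis_proj:
  assumes ob: "orthonormal_basis d \<phi>" and fin: "finite S" and S: "S \<subseteq> {..<d}" and j: "j < d"
  shows "diag_coeff \<phi> d j (basis_proj \<phi> S) = (if j \<in> S then 1 else 0)"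
proof -
  have "diag_coeff \<phi> d j (basis_proj \<phi> S)
      = (\<Sum>m\<in>S. \<Sum>i<d. \<Sum>l<d. (cnj (\<phi> j i) * \<phi> m i) * (cnj (\<phi> m l) * \<phi> j l))"
    unfolding diag_coeff_def basis_proj_def
    by (simp add: sum_distrib_left sum_distrib_right sum.swap[of _ S] mult_ac)
  also have "\<dots> = (\<Sum>m\<in>S. (\<Sum>i<d. cnj (\<phi> j i) * \<phi> m i) * (\<Sum>l<d. cnj (\<phi> m l) * \<phi> j l))"
    by (simp add: sum_product)
  also have "\<dots> = (\<Sum>m\<in>S. if j = m then 1 else 0)"
  proof (rule sum.cong[OF refl])
    fix m assume "m \<in> S"
    with S ob j show "(\<Sum>i<d. cnj (\<phi> j i) * \<phi> m i) * (\<Sum>l<d. cnj (\<phi> m l) * \<phi> j l)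
        = (if j = m then 1 else 0)"
      unfolding orthonormal_basis_def by auto
  qed
  also have "\<dots> = (if j \<in> S then 1 else 0)" using fin by simp
  finally show ?thesis .
qed

definition shift_dom :: "nat \<Rightarrow> nat \<Rightarrow> nat set" where
  "shift_dom d w = (if w = 0 then {d - 1} else {..<d - 1})"

definition shift_step :: "nat \<Rightarrow> nat \<Rightarrow> nat" where
  "shift_step w k = (if w = 0 then k else Suc k)"

text \<open>\<open>walk d ws k\<close> follows \<phi>_k through L_(ws!0), L_(ws!1), \<dots> and is \<open>None\<close> once it is
  annihilated; the outermost instrument in \<open>seq_obs\<close> is applied to the state first.\<close>

fun walk :: "nat \<Rightarrow> nat list \<Rightarrow> nat \<Rightarrow> nat option" where
  "walk d [] k = Some k"
| "walk d (w # ws) k = (if k \<in> shift_dom d w then walk d ws (shift_step w k) else None)"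

definition survivors :: "nat \<Rightarrow> nat list \<Rightarrow> nat set" where
  "survivors d ws = {k. k < d \<and> walk d ws k \<noteq> None}"

lemma shift_dom_facts:
  assumes "d \<ge> 2"
  shows "finite (shift_dom d w)" "shift_step w ` shift_dom d w \<subseteq> {..<d}"
    "inj_on (shift_step w) (shift_dom d w)"
  using assms by (auto simp: shift_dom_def shift_step_def inj_on_def)

lemma survivors_bounded: "finite (survivors d ws)" "survivors d ws \<subseteq> {..<d}"
  by (auto simp: survivors_def)

lemma survivors_single: "d \<ge> 2 \<Longrightarrow> survivors d [w] = shift_dom d w"
  by (auto simp: survivors_def shift_dom_def)

lemma survivors_Cons:
  "d \<ge> 2 \<Longrightarrow> survivors d (w # ws) = {k\<in>shift_dom d w. shift_step w k \<in> survivors d ws}"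
  by (auto simp: survivors_def shift_dom_def shift_step_def)

lemma walk_less: "k < d \<Longrightarrow> walk d ws k = Some m \<Longrightarrow> m < d"
  by (induction ws arbitrary: k) (auto simp: shift_dom_def shift_step_def less_diff_conv split: if_splits)

lemma walk_lower_bound: "walk d ws k = Some m \<Longrightarrow> min (d - 1) (k + length ws) \<le> m"
proof (induction ws arbitrary: k)
  case (Cons w ws)
  then have "k \<in> shift_dom d w" "min (d - 1) (shift_step w k + length ws) \<le> m"
    by (auto split: if_splits)
  then show ?case by (auto simp: shift_dom_def shift_step_def split: if_splits)
qed simp

lemma walk_append:
  "walk d (xs @ ys) k = (case walk d xs k of None \<Rightarrow> None | Some m \<Rightarrow> walk d ys m)"
  by (induction xs arbitrary: k) auto

lemma walk_replicate_one:
  "k < d \<Longrightarrow> walk d (replicate n 1) k = (if k + n \<le> d - 1 then Some (k + n) else None)"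
  by (induction n arbitrary: k) (auto simp: shift_dom_def shift_step_def)

lemma walk_downward_closed:
  "walk d ws k \<noteq> None \<Longrightarrow> k + length ws \<le> d - 1 \<Longrightarrow> k' \<le> k \<Longrightarrow> walk d ws k' \<noteq> None"
proof (induction ws arbitrary: k k')
  case (Cons w ws)
  then have k: "k \<in> shift_dom d w" and ws: "walk d ws (shift_step w k) \<noteq> None"
    by (auto split: if_splits)
  have w: "w \<noteq> 0" using k Cons.prems(2) by (auto simp: shift_dom_def split: if_splits)
  have "walk d ws (shift_step w k') \<noteq> None"
    using Cons.IH[OF ws] Cons.prems w by (auto simp: shift_step_def)
  then show ?case using w k Cons.prems by (auto simp: shift_dom_def)
qed simp

lemma survivors_snoc_zero:
  "survivors d (ws @ [0]) = {k\<in>survivors d ws. walk d ws k = Some (d - 1)}"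
  by (auto simp: survivors_def walk_append shift_dom_def split: option.splits)

lemma survivors_snoc_one:
  "survivors d (ws @ [1]) = {k\<in>survivors d ws. walk d ws k \<noteq> Some (d - 1)}"
  using walk_less[of _ d ws]
  by (fastforce simp: survivors_def walk_append shift_dom_def split: option.splits)

lemma walk_saturated:
  assumes "d - 1 \<le> length ws" "k \<in> survivors d ws"
  shows "walk d ws k = Some (d - 1)"
proof -
  obtain m where m: "walk d ws k = Some m" "k < d" using assms by (auto simp: survivors_def)
  then show ?thesis using walk_less[OF m(2,1)] walk_lower_bound[OF m(1)] assms(1) by auto
qed

lemma survivors_replicate_one_zero:
  assumes "n < d"
  shows "survivors d (replicate n 1 @ [0]) = {d - 1 - n}"
  using assms walk_replicate_one[of _ d n]
  by (auto simp: survivors_def walk_append shift_dom_def split: if_splits)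

lemma finite_outcomes_n: "finite \<Omega> \<Longrightarrow> finite (outcomes_n \<Omega> n)"
  unfolding outcomes_n_def using finite_lists_length_eq[of \<Omega> n] by (simp add: conj_commute)

lemma outcomes_n_Suc_snoc:
  assumes "ws \<in> outcomes_n \<Omega> (Suc n)"
  shows "ws = take n ws @ [ws ! n]" "take n ws \<in> outcomes_n \<Omega> n" "ws ! n \<in> \<Omega>"
proof -
  have len: "length ws = Suc n" and set: "set ws \<subseteq> \<Omega>" using assms by (auto simp: outcomes_n_def)
  show "ws = take n ws @ [ws ! n]" using len by (metis lessI take_Suc_conv_app_nth take_all order_refl)
  show "take n ws \<in> outcomes_n \<Omega> n" using len set set_take_subset[of n ws] by (auto simp: outcomes_n_def)
  show "ws ! n \<in> \<Omega>" using len set by (auto dest: nth_mem)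
qed

lemma sat_eqI:
  assumes "1 \<le> m" and "\<And>n. 1 \<le> n \<Longrightarrow> seq_equiv d \<Omega> I n \<longleftrightarrow> m \<le> n"
  shows "sat d \<Omega> I = enat m"
proof -
  have "(LEAST n. 1 \<le> n \<and> seq_equiv d \<Omega> I n) = m"
    by (rule Least_equality) (use assms in auto)
  then show ?thesis using assms unfolding sat_def by auto
qed

abbreviation binary_outcomes :: "nat \<Rightarrow> nat list set" where
  "binary_outcomes n \<equiv> outcomes_n {0, 1} n"

context
  fixes d :: nat and \<phi> :: "nat \<Rightarrow> cvec" and L :: "nat \<Rightarrow> cmat"
  assumes d: "d \<ge> 2"
    and ob: "orthonormal_basis d \<phi>"
    and L0: "L 0 = ketbra (\<phi> (d - 1)) (\<phi> (d - 1))"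
    and L1: "L 1 = (\<lambda>i j. \<Sum>k<d - 1. ketbra (\<phi> (Suc k)) (\<phi> k) i j)"
begin

abbreviation "shift_obs \<equiv> seq_obs (kraus_instr d L)"

lemma L_eq_basis_map: "w \<in> {0, 1} \<Longrightarrow> L w = basis_map \<phi> (shift_dom d w) (shift_step w)"
  using L0 L1 by (auto simp: basis_map_def shift_dom_def shift_step_def ketbra_def)

lemma shift_obs_eq_basis_proj_survivors:
  "ws \<noteq> [] \<Longrightarrow> set ws \<subseteq> {0, 1} \<Longrightarrow>
    mat_eq d (shift_obs ws) (basis_proj \<phi> (survivors d ws))"
proof (induction ws)
  case (Cons w ws)
  have obs_Cons: "shift_obs (w # ws) = mmul d (adj (basis_map \<phi> (shift_dom d w) (shift_step w)))
      (mmul d (shift_obs ws) (basis_map \<phi> (shift_dom d w) (shift_step w)))"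
    using L_eq_basis_map Cons.prems by (simp add: seq_obs_def kraus_instr_def)
  note conj = conj_basis_map_idm[OF ob shift_dom_facts[OF d]]
    conj_basis_map_basis_proj[OF ob shift_dom_facts[OF d] survivors_bounded]
  show ?case
  proof (cases "ws = []")
    case True
    then show ?thesis using obs_Cons conj(1) survivors_single[OF d] by (simp add: seq_obs_def)
  next
    case False
    then show ?thesis using obs_Cons conj(2) Cons survivors_Cons[OF d] by simp
  qed
qed simp

lemma shift_obs_outcomes_eq_basis_proj:
  "ws \<in> binary_outcomes n \<Longrightarrow> 1 \<le> n \<Longrightarrow>
    mat_eq d (shift_obs ws) (basis_proj \<phi> (survivors d ws))"
  by (rule shift_obs_eq_basis_proj_survivors) (auto simp: outcomes_n_def)

lemma post_le_Suc:
  assumes n: "1 \<le> n"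
  shows "post_le d (binary_outcomes n) shift_obs (binary_outcomes (Suc n)) shift_obs"
  unfolding post_le_def
proof (intro exI[of _ "\<lambda>ws ws'. if take n ws' = ws then 1 else 0"] conjI ballI)
  fix ws' assume "ws' \<in> binary_outcomes (Suc n)"
  then have "take n ws' \<in> binary_outcomes n" by (rule outcomes_n_Suc_snoc)
  then show "(\<Sum>ws\<in>binary_outcomes n. (if take n ws' = ws then 1 else 0 :: real)) = 1"
    by (simp add: finite_outcomes_n)
next
  fix ws assume ws: "ws \<in> binary_outcomes n"
  have extensions: "{ws'\<in>binary_outcomes (Suc n). take n ws' = ws} = {ws @ [0], ws @ [1]}"
  proof (intro equalityI subsetI)
    fix ws' assume "ws' \<in> {ws'\<in>binary_outcomes (Suc n). take n ws' = ws}"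
    then have "ws' \<in> binary_outcomes (Suc n)" "take n ws' = ws" by auto
    then show "ws' \<in> {ws @ [0], ws @ [1]}"
      using outcomes_n_Suc_snoc[of ws' "{0, 1}" n] by (metis insertCI insertE singletonD)
  qed (use ws in \<open>auto simp: outcomes_n_def\<close>)
  have survivors_split: "survivors d ws = survivors d (ws @ [0]) \<union> survivors d (ws @ [1])"
    "survivors d (ws @ [0]) \<inter> survivors d (ws @ [1]) = {}"
    unfolding survivors_snoc_zero survivors_snoc_one by auto
  have in_Suc: "ws @ [0] \<in> binary_outcomes (Suc n)" "ws @ [1] \<in> binary_outcomes (Suc n)"
    using ws by (auto simp: outcomes_n_def)
  show "mat_eq d (shift_obs ws)
      (\<lambda>i j. \<Sum>ws'\<in>binary_outcomes (Suc n). complex_of_real (if take n ws' = ws then 1 else 0) * shift_obs ws' i j)"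
    unfolding mat_eq_def
  proof (intro allI impI)
    fix i j assume ij: "i < d" "j < d"
    have "(\<Sum>ws'\<in>binary_outcomes (Suc n). complex_of_real (if take n ws' = ws then 1 else 0) * shift_obs ws' i j)
        = (\<Sum>ws'\<in>binary_outcomes (Suc n). if take n ws' = ws then shift_obs ws' i j else 0)"
      by (rule sum.cong) auto
    also have "\<dots> = (\<Sum>ws'\<in>{ws'\<in>binary_outcomes (Suc n). take n ws' = ws}. shift_obs ws' i j)"
      by (simp add: sum.inter_filter finite_outcomes_n)
    also have "\<dots> = basis_proj \<phi> (survivors d (ws @ [0])) i j + basis_proj \<phi> (survivors d (ws @ [1])) i j"
      unfolding extensions
      using shift_obs_outcomes_eq_basis_proj[OF in_Suc(1)] shift_obs_outcomes_eq_basis_proj[OF in_Suc(2)] ij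
      by (simp add: mat_eq_def)
    also have "\<dots> = basis_proj \<phi> (survivors d ws) i j"
      unfolding basis_proj_def survivors_split(1)
      by (simp only: sum.union_disjoint[OF survivors_bounded(1) survivors_bounded(1) survivors_split(2)])
    also have "\<dots> = shift_obs ws i j" using shift_obs_outcomes_eq_basis_proj[OF ws n] ij by (simp add: mat_eq_def)
    finally show "shift_obs ws i j = (\<Sum>ws'\<in>binary_outcomes (Suc n).
        complex_of_real (if take n ws' = ws then 1 else 0) * shift_obs ws' i j)"
      by simp
  qed
qed auto

lemma post_le_Suc_saturated:
  assumes n: "1 \<le> n" "d - 1 \<le> n"
  shows "post_le d (binary_outcomes (Suc n)) shift_obs (binary_outcomes n) shift_obs"
  unfolding post_le_def
proof (intro exI[of _ "\<lambda>ws ws'. if ws = ws' @ [0] then 1 else 0"] conjI ballI)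
  fix ws' assume "ws' \<in> binary_outcomes n"
  then have "ws' @ [0] \<in> binary_outcomes (Suc n)" by (auto simp: outcomes_n_def)
  then show "(\<Sum>ws\<in>binary_outcomes (Suc n). (if ws = ws' @ [0] then 1 else 0 :: real)) = 1"
    by (simp add: finite_outcomes_n)
next
  fix ws assume ws: "ws \<in> binary_outcomes (Suc n)"
  define u x where "u = take n ws" and "x = ws ! n"
  have ux: "ws = u @ [x]" "u \<in> binary_outcomes n" "x \<in> {0, 1}"
    using outcomes_n_Suc_snoc[OF ws] by (simp_all add: u_def x_def)
  have saturated: "walk d u k = Some (d - 1)" if "k \<in> survivors d u" for k
    using walk_saturated[OF _ that] ux(2) n by (auto simp: outcomes_n_def)
  have "shift_obs ws i j = (if x = 0 then shift_obs u i j else 0)" if ij: "i < d" "j < d" for i j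
  proof (cases "x = 0")
    case True
    then have "survivors d ws = survivors d u"
      using saturated by (auto simp: ux(1) survivors_snoc_zero)
    then show ?thesis
      using True shift_obs_outcomes_eq_basis_proj[OF ws] shift_obs_outcomes_eq_basis_proj[OF ux(2) n(1)] ij
      by (simp add: mat_eq_def)
  next
    case False
    then have ws1: "ws = u @ [1]" using ux(1,3) by simp
    have "survivors d ws = {}"
      unfolding ws1 survivors_snoc_one using saturated by auto
    then show ?thesis
      using False shift_obs_outcomes_eq_basis_proj[OF ws] ij by (simp add: mat_eq_def basis_proj_def)
  qed
  moreover have "(\<Sum>ws'\<in>binary_outcomes n. complex_of_real (if ws = ws' @ [0] then 1 else 0) * shift_obs ws' i j)
      = (if x = 0 then shift_obs u i j else 0)" for i j
  proof -
    have "(\<Sum>ws'\<in>binary_outcomes n. complex_of_real (if ws = ws' @ [0] then 1 else 0) * shift_obs ws' i j)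
        = (\<Sum>ws'\<in>binary_outcomes n. if ws' = u then (if x = 0 then shift_obs u i j else 0) else 0)"
      by (rule sum.cong) (auto simp: ux(1))
    then show ?thesis using ux(2) by (simp add: finite_outcomes_n)
  qed
  ultimately show "mat_eq d (shift_obs ws)
      (\<lambda>i j. \<Sum>ws'\<in>binary_outcomes n. complex_of_real (if ws = ws' @ [0] then 1 else 0) * shift_obs ws' i j)"
    by (simp add: mat_eq_def)
qed auto

lemma survivor_indicator_post_processing:
  assumes ws: "ws \<in> binary_outcomes m" "1 \<le> m" and n: "1 \<le> n" and j: "j < d"
    and \<kappa>: "mat_eq d (shift_obs ws)
      (\<lambda>i l. \<Sum>ws'\<in>binary_outcomes n. complex_of_real (\<kappa> ws') * shift_obs ws' i l)"
  shows "(if j \<in> survivors d ws then 1 else 0)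
       = (\<Sum>ws'\<in>binary_outcomes n. \<kappa> ws' * (if j \<in> survivors d ws' then 1 else 0))"
proof -
  have indicator: "diag_coeff \<phi> d j (shift_obs ws') = (if j \<in> survivors d ws' then 1 else 0)"
    if "ws' \<in> binary_outcomes k" "1 \<le> k" for ws' k
    using diag_coeff_cong[OF shift_obs_outcomes_eq_basis_proj[OF that]]
      diag_coeff_basis_proj[OF ob survivors_bounded j] by simp
  have "complex_of_real (if j \<in> survivors d ws then 1 else 0) = diag_coeff \<phi> d j (shift_obs ws)"
    using indicator[OF ws] by simp
  also have "\<dots> = (\<Sum>ws'\<in>binary_outcomes n. complex_of_real (\<kappa> ws') * diag_coeff \<phi> d j (shift_obs ws'))"
    using diag_coeff_cong[OF \<kappa>] diag_coeff_sum by simp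
  also have "\<dots> = complex_of_real (\<Sum>ws'\<in>binary_outcomes n. \<kappa> ws' * (if j \<in> survivors d ws' then 1 else 0))"
    using indicator[OF _ n] by (auto simp: of_real_sum intro!: sum.cong)
  finally show ?thesis by (simp only: of_real_eq_iff)
qed

lemma not_post_le_Suc_unsaturated:
  assumes n: "1 \<le> n" "n < d - 1"
  shows "\<not> post_le d (binary_outcomes (Suc n)) shift_obs (binary_outcomes n) shift_obs"
proof
  assume "post_le d (binary_outcomes (Suc n)) shift_obs (binary_outcomes n) shift_obs"
  then obtain \<kappa> :: "nat list \<Rightarrow> nat list \<Rightarrow> real" where
    \<kappa>_nonneg: "\<forall>ws\<in>binary_outcomes (Suc n). \<forall>ws'\<in>binary_outcomes n. 0 \<le> \<kappa> ws ws'" and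
    \<kappa>_post: "\<forall>ws\<in>binary_outcomes (Suc n). mat_eq d (shift_obs ws)
      (\<lambda>i j. \<Sum>ws'\<in>binary_outcomes n. complex_of_real (\<kappa> ws ws') * shift_obs ws' i j)"
    unfolding post_le_def by blast
  define ws where "ws = replicate n 1 @ [0::nat]"
  have ws_in: "ws \<in> binary_outcomes (Suc n)" by (auto simp: ws_def outcomes_n_def)
  have ws_survivors: "survivors d ws = {d - 1 - n}"
    unfolding ws_def using n by (intro survivors_replicate_one_zero) simp
  define weight where
    "weight j = (\<Sum>ws'\<in>binary_outcomes n. \<kappa> ws ws' * (if j \<in> survivors d ws' then 1 else 0))" for j
  have weight: "weight j = (if j = d - 1 - n then 1 else 0)" if "j < d" for j
    using survivor_indicator_post_processing[OF ws_in _ n(1) that bspec[OF \<kappa>_post ws_in]]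
    unfolding weight_def ws_survivors by simp
  have "weight (d - 1 - n) \<le> weight 0"
    unfolding weight_def
  proof (rule sum_mono)
    fix ws' assume ws': "ws' \<in> binary_outcomes n"
    then have "0 \<in> survivors d ws'" if "d - 1 - n \<in> survivors d ws'"
      using that walk_downward_closed[of d ws' "d - 1 - n" 0] n d
      by (auto simp: survivors_def outcomes_n_def)
    then show "\<kappa> ws ws' * (if d - 1 - n \<in> survivors d ws' then 1 else 0)
        \<le> \<kappa> ws ws' * (if 0 \<in> survivors d ws' then 1 else 0)"
      using \<kappa>_nonneg ws_in ws' by auto
  qed
  then show False using weight[of 0] weight[of "d - 1 - n"] n by (simp split: if_splits)
qed

end

theorem mainTheorem6:
  fixes d :: nat and \<phi> :: "nat \<Rightarrow> cvec" and L :: "nat \<Rightarrow> cmat"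
  assumes "d \<ge> 2"
    and "orthonormal_basis d \<phi>"
    and "L 0 = ketbra (\<phi> (d - 1)) (\<phi> (d - 1))"
    and "L 1 = (\<lambda>i j. \<Sum>k<d - 1. ketbra (\<phi> (Suc k)) (\<phi> k) i j)"
  shows "(\<forall>n. 1 \<le> n \<and> n < d - 1 \<longrightarrow>
            post_less d (outcomes_n {0,1} n) (seq_obs (kraus_instr d L))
                        (outcomes_n {0,1} (Suc n)) (seq_obs (kraus_instr d L)))
       \<and> (\<forall>n\<ge>d - 1. seq_equiv d {0,1} (kraus_instr d L) n)
       \<and> sat d {0,1} (kraus_instr d L) = enat (d - 1)"
proof -
  note up = post_le_Suc[OF assms] and down = post_le_Suc_saturated[OF assms]
    and no_down = not_post_le_Suc_unsaturated[OF assms]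
  have equiv_iff: "seq_equiv d {0,1} (kraus_instr d L) n \<longleftrightarrow> d - 1 \<le> n" if "1 \<le> n" for n
    using up[OF that] down[OF that] no_down[OF that]
    unfolding seq_equiv_def post_equiv_def by (meson not_le)
  have "sat d {0,1} (kraus_instr d L) = enat (d - 1)"
    by (rule sat_eqI) (use assms(1) equiv_iff in auto)
  moreover have "\<forall>n\<ge>d - 1. seq_equiv d {0,1} (kraus_instr d L) n"
    using assms(1) equiv_iff by auto
  moreover have "post_less d (outcomes_n {0,1} n) (seq_obs (kraus_instr d L))
      (outcomes_n {0,1} (Suc n)) (seq_obs (kraus_instr d L))" if "1 \<le> n" "n < d - 1" for n
    unfolding post_less_def using up no_down that by blast
  ultimately show ?thesis by blast
qed

end
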